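(* (i) $\mathcal Z_{1+}=\{z=x+iy\in E^{(c)}_{d+1}:\ (x,x)-(y,y)=1,\ (x,y)=0,\ (y,y)>0,\ y^0x^d-x^0y^d>0\}$ (with $x,y\in E_{d+1}$). (ii) $\mathcal Z_{1+}=\{\Lambda\exp(itM_{0d})e_d:\ \Lambda\in G_0,\ t>0\}$. (iii) If $z\in\mathcal Z_{1+}$ then $z^0\neq0$, $z^d\neq0$, and $\mathrm{Im}(z^0/z^d)>0$.
   Context: Let $d\ge2$. $E_{d+1}=\mathbb R^{d+1}$, $E^{(c)}_{d+1}=\mathbb C^{d+1}$ with bilinear form $(x,y)=x^0y^0+x^dy^d-\sum_{j=1}^{d-1}x^jy^j$, canonical basis $e_0,\dots,e_d$. $X_d=\{x\in E_{d+1}:(x,x)=1\}$. $G_0$ is the identity component of the group of real linear maps preserving the form; $\exp$ is the matrix exponential. For $a,b\in E_{d+1}$, $\ell(a\wedge b)$ is the map $x\mapsto a(b,x)-b(a,x)$, and $M_{0d}=\ell(e_0\wedge e_d)$. $\mathcal C_1=\{\ell(a\wedge b):(a,a)=(b,b)=1,(a,b)=0,a^0b^d-a^db^0>0\}$. $\mathcal Z_{1+}=\{\exp(\tau M)c: M\in\mathcal C_1,\ c\in X_d,\ \tau\in\mathbb C,\ \mathrm{Im}\,\tau>0\}$. *)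

theory Defs
  imports "HOL-Analysis.Analysis"
begin

text \<open>Vectors of E_{d+1} (resp. its complexification) are represented as functions
  nat => real (resp. nat => complex) vanishing outside {0..d}; coordinate i is x i.
  (d+1)x(d+1) matrices are functions nat => nat => 'a vanishing outside {0..d}^2;
  they carry the product topology of the function space, which on such matrices is
  the usual topology of R^((d+1)^2).\<close>

definition vec_on :: "nat \<Rightarrow> (nat \<Rightarrow> 'a::zero) \<Rightarrow> bool" where
  "vec_on d x \<longleftrightarrow> (\<forall>i>d. x i = 0)"

definition mat_on :: "nat \<Rightarrow> (nat \<Rightarrow> nat \<Rightarrow> 'a::zero) \<Rightarrow> bool" where
  "mat_on d A \<longleftrightarrow> (\<forall>i j. d < i \<or> d < j \<longrightarrow> A i j = 0)"

definition evec :: "nat \<Rightarrow> nat \<Rightarrow> 'a::{zero,one}" where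
  "evec i = (\<lambda>j. if j = i then 1 else 0)"

definition form :: "nat \<Rightarrow> (nat \<Rightarrow> 'a::comm_ring) \<Rightarrow> (nat \<Rightarrow> 'a) \<Rightarrow> 'a" where
  "form d x y = x 0 * y 0 + x d * y d - (\<Sum>j\<in>{1..<d}. x j * y j)"

definition mat_app :: "nat \<Rightarrow> (nat \<Rightarrow> nat \<Rightarrow> 'a::comm_semiring_0) \<Rightarrow> (nat \<Rightarrow> 'a) \<Rightarrow> nat \<Rightarrow> 'a" where
  "mat_app d A x = (\<lambda>i. if i \<le> d then (\<Sum>j\<le>d. A i j * x j) else 0)"

definition mat_id :: "nat \<Rightarrow> nat \<Rightarrow> nat \<Rightarrow> 'a::{zero,one}" where
  "mat_id d = (\<lambda>i j. if i = j \<and> i \<le> d then 1 else 0)"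

definition mat_mult :: "nat \<Rightarrow> (nat \<Rightarrow> nat \<Rightarrow> 'a::comm_semiring_0) \<Rightarrow> (nat \<Rightarrow> nat \<Rightarrow> 'a) \<Rightarrow> nat \<Rightarrow> nat \<Rightarrow> 'a" where
  "mat_mult d A B = (\<lambda>i j. if i \<le> d \<and> j \<le> d then (\<Sum>k\<le>d. A i k * B k j) else 0)"

fun mat_pow :: "nat \<Rightarrow> (nat \<Rightarrow> nat \<Rightarrow> 'a::comm_semiring_1) \<Rightarrow> nat \<Rightarrow> nat \<Rightarrow> nat \<Rightarrow> 'a" where
  "mat_pow d A 0 = mat_id d"
| "mat_pow d A (Suc n) = mat_mult d A (mat_pow d A n)"

definition mat_exp :: "nat \<Rightarrow> (nat \<Rightarrow> nat \<Rightarrow> complex) \<Rightarrow> nat \<Rightarrow> nat \<Rightarrow> complex" where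
  "mat_exp d A = (\<lambda>i j. (\<Sum>n. mat_pow d A n i j / of_nat (fact n)))"

definition cmat :: "(nat \<Rightarrow> nat \<Rightarrow> real) \<Rightarrow> nat \<Rightarrow> nat \<Rightarrow> complex" where
  "cmat A = (\<lambda>i j. complex_of_real (A i j))"

definition cvec :: "(nat \<Rightarrow> real) \<Rightarrow> nat \<Rightarrow> complex" where
  "cvec x = (\<lambda>i. complex_of_real (x i))"

definition Xd :: "nat \<Rightarrow> (nat \<Rightarrow> real) set" where
  "Xd d = {x. vec_on d x \<and> form d x x = 1}"

definition Ogroup :: "nat \<Rightarrow> (nat \<Rightarrow> nat \<Rightarrow> real) set" where
  "Ogroup d = {A. mat_on d A \<and>
     (\<forall>x y. vec_on d x \<longrightarrow> vec_on d y \<longrightarrow> form d (mat_app d A x) (mat_app d A y) = form d x y)}"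

definition G0 :: "nat \<Rightarrow> (nat \<Rightarrow> nat \<Rightarrow> real) set" where
  "G0 d = connected_component_set (Ogroup d) (mat_id d)"

text \<open>matrix of l(a wedge b): x |-> a (b,x) - b (a,x)\<close>
definition wedge :: "nat \<Rightarrow> (nat \<Rightarrow> real) \<Rightarrow> (nat \<Rightarrow> real) \<Rightarrow> nat \<Rightarrow> nat \<Rightarrow> real" where
  "wedge d a b = (\<lambda>i j. if i \<le> d \<and> j \<le> d
      then a i * form d b (evec j) - b i * form d a (evec j) else 0)"

definition M0d :: "nat \<Rightarrow> nat \<Rightarrow> nat \<Rightarrow> real" where
  "M0d d = wedge d (evec 0) (evec d)"

definition C1 :: "nat \<Rightarrow> (nat \<Rightarrow> nat \<Rightarrow> real) set" where
  "C1 d = {wedge d a b | a b. vec_on d a \<and> vec_on d b \<and> form d a a = 1 \<and> form d b b = 1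
      \<and> form d a b = 0 \<and> a 0 * b d - a d * b 0 > 0}"

definition Z1plus :: "nat \<Rightarrow> (nat \<Rightarrow> complex) set" where
  "Z1plus d = {mat_app d (mat_exp d (\<lambda>i j. \<tau> * cmat M i j)) (cvec c) | M c \<tau>.
      M \<in> C1 d \<and> c \<in> Xd d \<and> Im \<tau> > 0}"

end

theory Submission
  imports Defs
begin

(* For an orthonormal pair a, b the map W = l(a /\ b) satisfies W^2 = -P and W P = W, where
   P = a (a,.) + b (b,.) is the orthogonal projection onto span {a, b}; hence
   exp (tau W) = 1 - P + cos tau P + sin tau W.  For tau = s + i t this gives
   exp (tau W) c = x + i y with x = w + cosh t m, y = sinh t m', where w is orthogonal to a, b
   and m, m' are explicit combinations of a, b.  The identities in (i) follow at once; the
   inequalities come from the fact that the form is negative semidefinite on the orthogonal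
   complement of span {e_0, e_d}.  Conversely, a point x + i y of the set in (i) is
   exp (i T l(u /\ -v)) u for u = x / sqrt (x,x), v = y / sqrt (y,y) and cosh T = sqrt (x,x).

   For (ii), exp (i t M_0d) e_d = cosh t e_d + i sinh t e_0, so the orbit consists of the vectors
   cosh t L e_d + i sinh t L e_0.  The (0,d)-minor of L never vanishes on the orthogonal group
   and equals 1 at the identity, so by connectedness it is positive on G_0.  Conversely, every
   orthonormal pair with positive (0,d)-minor is the pair of (0,d)-columns of a product of three
   elements of G_0: a rotation in the (e_0, e_d)-plane and two rotations, each taking a unit
   vector to a unit vector at positive inner product with it; all three are joined to the
   identity by explicit paths.  Part (iii) is the sign of the
   (0,d)-minor of (Im z, Re z). *)

lemma Re_cos_cosh: "Re (cos z) = cos (Re z) * cosh (Im z)"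
  by (simp add: Re_cos cosh_field_def)

lemma Im_cos_sinh: "Im (cos z) = - sin (Re z) * sinh (Im z)"
  by (simp add: Im_cos sinh_field_def algebra_simps)

lemma Re_sin_cosh: "Re (sin z) = sin (Re z) * cosh (Im z)"
  by (simp add: Re_sin cosh_field_def)

lemma Im_sin_sinh: "Im (sin z) = cos (Re z) * sinh (Im z)"
  by (simp add: Im_sin sinh_field_def)

lemma cos_sin_i_times_of_real:
  "cos (\<i> * of_real T) = of_real (cosh T)" "sin (\<i> * of_real T) = \<i> * of_real (sinh T)"
  by (simp_all add: complex_eq_iff Re_cos_cosh Im_cos_sinh Re_sin_cosh Im_sin_sinh)

lemma form_commute: "form d x y = form d y x"
  unfolding form_def by (simp add: mult.commute)

lemma form_add_left: "form d (\<lambda>i. f i + g i) z = form d f z + form d g z"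
  unfolding form_def by (simp add: algebra_simps sum.distrib)

lemma form_diff_left: "form d (\<lambda>i. f i - g i) z = form d f z - form d g z"
  unfolding form_def by (simp add: algebra_simps sum_subtractf)

lemma form_minus_left: "form d (\<lambda>i. - f i) z = - form d f z"
  unfolding form_def by (simp add: algebra_simps sum_negf)

lemma form_scale_left: "form d (\<lambda>i. c * f i) z = c * form d f z"
  unfolding form_def by (simp add: algebra_simps sum_distrib_left)

lemma form_divide_left: "form d (\<lambda>i. f i / (c::'a::field)) z = form d f z / c"
  unfolding form_def by (simp add: diff_divide_distrib add_divide_distrib sum_divide_distrib)

lemma form_add_right: "form d z (\<lambda>i. f i + g i) = form d z f + form d z g"
  by (metis form_commute form_add_left)

lemma form_diff_right: "form d z (\<lambda>i. f i - g i) = form d z f - form d z g"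
  by (metis form_commute form_diff_left)

lemma form_minus_right: "form d z (\<lambda>i. - f i) = - form d z f"
  by (metis form_commute form_minus_left)

lemma form_scale_right: "form d z (\<lambda>i. c * f i) = c * form d z f"
  by (metis form_commute form_scale_left)

lemma form_divide_right: "form d z (\<lambda>i. f i / (c::'a::field)) = form d z f / c"
  by (metis form_commute form_divide_left)

lemmas form_linear = form_add_left form_diff_left form_minus_left form_scale_left form_divide_left
  form_add_right form_diff_right form_minus_right form_scale_right form_divide_right

definition form_sign :: "nat \<Rightarrow> nat \<Rightarrow> 'a::comm_ring_1" where
  "form_sign d j = (if j = 0 \<or> j = d then 1 else if j < d then -1 else 0)"

lemma form_evec: "d \<ge> 1 \<Longrightarrow> form d (b::nat \<Rightarrow> 'a::comm_ring_1) (evec j) = form_sign d j * b j"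
  unfolding form_def evec_def form_sign_def
  by (auto simp: if_distrib[where f="\<lambda>x. _ * x"] sum.delta cong: if_cong)

lemma form_eq_sum_evec:
  assumes "d \<ge> 1"
  shows "form d (b::nat \<Rightarrow> 'a::comm_ring_1) x = (\<Sum>j\<le>d. form d b (evec j) * x j)"
proof -
  have split: "{..d} = insert 0 (insert d {1..<d})" using assms by auto
  have "(\<Sum>j\<in>insert 0 (insert d {1..<d}). form d b (evec j) * x j)
      = form d b (evec 0) * x 0 + (form d b (evec d) * x d + (\<Sum>j\<in>{1..<d}. form d b (evec j) * x j))"
    using assms by (subst sum.insert, simp, simp, subst sum.insert, auto)
  also have "(\<Sum>j\<in>{1..<d}. form d b (evec j) * x j) = (\<Sum>j\<in>{1..<d}. - (b j * x j))"
    using assms by (intro sum.cong) (auto simp: form_evec form_sign_def)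
  finally have "(\<Sum>j\<le>d. form d b (evec j) * x j) = b 0 * x 0 + (b d * x d + (\<Sum>j\<in>{1..<d}. - (b j * x j)))"
    using assms unfolding split by (simp add: form_evec form_sign_def)
  then show ?thesis
    unfolding form_def[of d b x] by (simp add: sum_negf)
qed

lemma form_evec0_left: "d \<ge> 1 \<Longrightarrow> form d (evec 0) (x::nat \<Rightarrow> 'a::comm_ring_1) = x 0"
  by (subst form_commute) (simp add: form_evec form_sign_def)

lemma form_evecd_left: "d \<ge> 1 \<Longrightarrow> form d (evec d) (x::nat \<Rightarrow> 'a::comm_ring_1) = x d"
  by (subst form_commute) (simp add: form_evec form_sign_def)

lemma form_nonpos_if_0d_zero: "u 0 = 0 \<Longrightarrow> u d = 0 \<Longrightarrow> form d u u \<le> (0::real)"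
  unfolding form_def by (simp add: sum_nonneg)

lemma vec_on_evec: "j \<le> d \<Longrightarrow> vec_on d (evec j)"
  by (auto simp: vec_on_def evec_def)

lemma vec_on_mat_app: "vec_on d (mat_app d A x)"
  by (simp add: vec_on_def mat_app_def)

lemma mat_on_mat_mult: "mat_on d (mat_mult d A B)"
  by (simp add: mat_on_def mat_mult_def)

lemma mat_on_mat_id: "mat_on d (mat_id d)"
  by (simp add: mat_on_def mat_id_def)

lemma mat_app_id: "vec_on d x \<Longrightarrow> mat_app d (mat_id d) (x::nat \<Rightarrow> 'a::comm_ring_1) = x"
  by (auto simp: mat_app_def mat_id_def vec_on_def fun_eq_iff if_distrib[where f="\<lambda>x. x * _"] cong: if_cong)

lemma mat_mult_id_right: "mat_on d A \<Longrightarrow> mat_mult d A (mat_id d) = (A::nat \<Rightarrow> nat \<Rightarrow> 'a::comm_ring_1)"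
  by (auto simp: mat_mult_def mat_id_def mat_on_def fun_eq_iff if_distrib[where f="\<lambda>x. _ * x"] cong: if_cong)

lemma mat_app_evec:
  "mat_on d A \<Longrightarrow> j \<le> d \<Longrightarrow> mat_app d A (evec j) = (\<lambda>i. (A::nat \<Rightarrow> nat \<Rightarrow> 'a::comm_ring_1) i j)"
  by (auto simp: mat_app_def evec_def mat_on_def fun_eq_iff if_distrib[where f="\<lambda>x. _ * x"] cong: if_cong)

lemma mat_app_mult: "mat_app d (mat_mult d A B) x = mat_app d A (mat_app d B x)"
proof (rule ext)
  fix i
  have "(\<Sum>j\<le>d. (\<Sum>k\<le>d. A i k * B k j) * x j) = (\<Sum>j\<le>d. \<Sum>k\<le>d. A i k * B k j * x j)"
    by (simp add: sum_distrib_right)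
  also have "\<dots> = (\<Sum>k\<le>d. \<Sum>j\<le>d. A i k * B k j * x j)"
    by (rule sum.swap)
  also have "\<dots> = (\<Sum>k\<le>d. A i k * (\<Sum>j\<le>d. B k j * x j))"
    by (simp add: sum_distrib_left mult.assoc)
  finally show "mat_app d (mat_mult d A B) x i = mat_app d A (mat_app d B x) i"
    by (auto simp: mat_app_def mat_mult_def intro!: sum.cong)
qed

lemma mat_mult_eq_app_column: "mat_mult d A B i j = (if j \<le> d then mat_app d A (\<lambda>k. B k j) i else 0)"
  by (auto simp: mat_mult_def mat_app_def)

lemma mat_mult_column: "j \<le> d \<Longrightarrow> (\<lambda>i. mat_mult d A B i j) = mat_app d A (\<lambda>k. B k j)"
  by (simp add: mat_mult_eq_app_column)

lemma mat_mult_scale_right: "mat_mult d A (\<lambda>i j. c * B i j) = (\<lambda>i j. c * mat_mult d A B i j)"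
  by (auto simp: mat_mult_def fun_eq_iff sum_distrib_left mult_ac)

lemma mat_mult_minus_right:
  "mat_mult d A (\<lambda>i j. - B i j) = (\<lambda>i j. - mat_mult d A B i j :: 'a::comm_ring)"
  by (auto simp: mat_mult_def fun_eq_iff sum_negf)

lemma mat_pow_scale_cmat:
  assumes "mat_on d A"
  shows "mat_pow d (\<lambda>i j. \<tau> * cmat A i j) (Suc n) = (\<lambda>i j. \<tau> ^ Suc n * cmat (mat_pow d A (Suc n)) i j)"
proof (induction n)
  case 0
  have "mat_mult d (\<lambda>i j. \<tau> * cmat A i j) (mat_id d) = (\<lambda>i j. \<tau> * cmat A i j)"
    using assms by (simp add: mat_mult_id_right mat_on_def cmat_def)
  then show ?case
    using assms by (simp add: mat_mult_id_right)
next
  case (Suc n)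
  then show ?case
    by (auto simp: mat_mult_def cmat_def fun_eq_iff sum_distrib_left mult_ac)
qed

lemma mat_app_cmat_cvec: "mat_app d (cmat A) (cvec x) = cvec (mat_app d A x)"
  by (auto simp: mat_app_def cmat_def cvec_def fun_eq_iff)

lemma mat_app_cmat_combination:
  "mat_app d (\<lambda>i j. cmat A i j + p * cmat B i j + q * cmat C i j) (cvec x)
     = (\<lambda>i. of_real (mat_app d A x i) + p * of_real (mat_app d B x i) + q * of_real (mat_app d C x i))"
  by (auto simp: mat_app_def cmat_def cvec_def fun_eq_iff sum.distrib sum_distrib_left algebra_simps)

lemma mat_app_lincomb:
  "mat_app d A (\<lambda>k. \<alpha> * x k + \<beta> * y k) = (\<lambda>i. \<alpha> * mat_app d A x i + \<beta> * mat_app d A y i)"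
  by (auto simp: mat_app_def fun_eq_iff sum.distrib sum_distrib_left algebra_simps)

lemma mat_app_add:
  "mat_app d (\<lambda>i j. A i j + B i j) x = (\<lambda>i. mat_app d A x i + mat_app d B x i)"
  by (auto simp: mat_app_def fun_eq_iff sum.distrib algebra_simps)

lemma mat_app_form_rows:
  fixes A :: "nat \<Rightarrow> nat \<Rightarrow> 'a::comm_ring_1"
  assumes "d \<ge> 1" and "\<And>i j. i \<le> d \<Longrightarrow> j \<le> d \<Longrightarrow> A i j = form d (r i) (evec j)"
  shows "mat_app d A x = (\<lambda>i. if i \<le> d then form d (r i) x else 0)"
proof (rule ext)
  fix i
  have "i \<le> d \<Longrightarrow> (\<Sum>j\<le>d. A i j * x j) = (\<Sum>j\<le>d. form d (r i) (evec j) * x j)"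
    using assms(2) by (intro sum.cong) auto
  then show "mat_app d A x i = (if i \<le> d then form d (r i) x else 0)"
    by (simp add: mat_app_def form_eq_sum_evec[OF assms(1), of "r i" x])
qed

lemma mat_app_wedge:
  "d \<ge> 1 \<Longrightarrow> mat_app d (wedge d a b) x = (\<lambda>i. if i \<le> d then a i * form d b x - b i * form d a x else 0)"
  by (subst mat_app_form_rows[where r="\<lambda>i k. a i * b k - b i * a k"]) (auto simp: wedge_def form_linear)

definition plane_proj :: "nat \<Rightarrow> (nat \<Rightarrow> real) \<Rightarrow> (nat \<Rightarrow> real) \<Rightarrow> nat \<Rightarrow> nat \<Rightarrow> real" where
  "plane_proj d a b = (\<lambda>i j. if i \<le> d \<and> j \<le> d
      then a i * form d a (evec j) + b i * form d b (evec j) else 0)"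

lemma mat_on_wedge: "mat_on d (wedge d a b)"
  by (simp add: mat_on_def wedge_def)

lemma mat_app_plane_proj:
  "d \<ge> 1 \<Longrightarrow> mat_app d (plane_proj d a b) x = (\<lambda>i. if i \<le> d then a i * form d a x + b i * form d b x else 0)"
  by (subst mat_app_form_rows[where r="\<lambda>i k. a i * a k + b i * b k"]) (auto simp: plane_proj_def form_linear)

section \<open>Orthonormal pairs and the exponential of \<open>\<ell>(a \<and> b)\<close>\<close>

locale orthonormal_pair =
  fixes d :: nat and a b :: "nat \<Rightarrow> real"
  assumes d_pos: "d \<ge> 1" and vec_on_a: "vec_on d a" and vec_on_b: "vec_on d b"
    and form_aa: "form d a a = 1" and form_bb: "form d b b = 1" and form_ab: "form d a b = 0"
begin

lemma form_ba: "form d b a = 0"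
  using form_ab form_commute by metis

lemma swap: "orthonormal_pair d b a"
  using d_pos vec_on_a vec_on_b form_aa form_bb form_ba by unfold_locales

lemma form_lincomb: "form d (\<lambda>i. p * a i + q * b i) (\<lambda>i. p' * a i + q' * b i) = p * p' + q * q'"
  by (simp add: form_linear form_aa form_bb form_ab form_ba)

lemma form_orthogonal_lincomb:
  assumes "form d w a = 0" "form d w b = 0"
  shows "form d (\<lambda>i. w i + p * a i + q * b i) (\<lambda>i. w i + p * a i + q * b i) = form d w w + p\<^sup>2 + q\<^sup>2"
    and "form d (\<lambda>i. w i + p * a i + q * b i) (\<lambda>i. p' * a i + q' * b i) = p * p' + q * q'"
  using assms form_commute[of d w a] form_commute[of d w b]
  by (simp_all add: form_linear form_aa form_bb form_ab form_ba power2_eq_square)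

text \<open>Otherwise a nonzero combination of \<open>a\<close> and \<open>b\<close> would vanish at \<open>0\<close> and \<open>d\<close>,
  and so have nonpositive square.\<close>

lemma minor_0d_nonzero: "a 0 * b d - a d * b 0 \<noteq> 0"
proof
  assume minor: "a 0 * b d - a d * b 0 = 0"
  have "p\<^sup>2 + q\<^sup>2 \<le> 0" if "p * a 0 + q * b 0 = 0" "p * a d + q * b d = 0" for p q
    using form_nonpos_if_0d_zero[of "\<lambda>i. p * a i + q * b i" d] that
    by (simp add: form_lincomb power2_eq_square)
  from this[of "b 0" "- a 0"] this[of "b d" "- a d"] have "b 0 = 0 \<and> a 0 = 0" "b d = 0 \<and> a d = 0"
    using minor by (simp_all add: algebra_simps sum_power2_le_zero_iff)
  then have "form d a a \<le> 0"
    by (intro form_nonpos_if_0d_zero) auto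
  then show False
    using form_aa by simp
qed

lemma wedge_column: "j \<le> d \<Longrightarrow> (\<lambda>k. wedge d a b k j) = (\<lambda>k. form d b (evec j) * a k - form d a (evec j) * b k)"
  using vec_on_a vec_on_b unfolding wedge_def vec_on_def by auto

lemma plane_proj_column:
  "j \<le> d \<Longrightarrow> (\<lambda>k. plane_proj d a b k j) = (\<lambda>k. form d a (evec j) * a k + form d b (evec j) * b k)"
  using vec_on_a vec_on_b unfolding plane_proj_def vec_on_def by auto

lemma wedge_mult_wedge: "mat_mult d (wedge d a b) (wedge d a b) = (\<lambda>i j. - plane_proj d a b i j)"
  by (auto simp: fun_eq_iff mat_mult_eq_app_column mat_app_wedge[OF d_pos] wedge_column form_linear
      form_aa form_bb form_ab form_ba plane_proj_def)

lemma wedge_mult_plane_proj: "mat_mult d (wedge d a b) (plane_proj d a b) = wedge d a b"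
proof (rule ext)+
  fix i j
  show "mat_mult d (wedge d a b) (plane_proj d a b) i j = wedge d a b i j"
    by (simp add: mat_mult_eq_app_column mat_app_wedge[OF d_pos] plane_proj_column form_linear
        form_aa form_bb form_ab form_ba) (simp add: wedge_def)
qed

lemma mat_pow_wedge:
  "mat_pow d (wedge d a b) (Suc n)
     = (\<lambda>i j. (-1) ^ (Suc n div 2) * (if even (Suc n) then plane_proj d a b i j else wedge d a b i j))"
proof (induction n)
  case 0
  show ?case
    by (simp add: mat_mult_id_right mat_on_wedge)
next
  case (Suc n)
  have "mat_pow d (wedge d a b) (Suc (Suc n)) = mat_mult d (wedge d a b) (mat_pow d (wedge d a b) (Suc n))"
    by simp
  then show ?case
    unfolding Suc.IH
    by (cases "even n") (auto simp: mat_mult_scale_right mat_mult_minus_right wedge_mult_wedge wedge_mult_plane_proj fun_eq_iff)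
qed

lemma mat_exp_wedge:
  "mat_exp d (\<lambda>i j. \<tau> * cmat (wedge d a b) i j) = (\<lambda>i j.
     cmat (mat_id d) i j + (cos \<tau> - 1) * cmat (plane_proj d a b) i j + sin \<tau> * cmat (wedge d a b) i j)"
proof (rule ext)+
  fix i j
  let ?I = "cmat (mat_id d) i j" and ?P = "cmat (plane_proj d a b) i j" and ?W = "cmat (wedge d a b) i j"
  have "mat_pow d (\<lambda>i j. \<tau> * cmat (wedge d a b) i j) n i j / of_nat (fact n)
      = (if n = 0 then ?I - ?P else 0) + (cos_coeff n *\<^sub>R \<tau> ^ n) * ?P + (sin_coeff n *\<^sub>R \<tau> ^ n) * ?W" for n
  proof (cases n)
    case 0
    then show ?thesis
      by (simp add: cmat_def mat_id_def)
  next
    case (Suc m)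
    show ?thesis
      unfolding Suc mat_pow_scale_cmat[OF mat_on_wedge] mat_pow_wedge
      by (cases "even m") (auto simp: cos_coeff_def sin_coeff_def cmat_def scaleR_conv_of_real field_simps)
  qed
  moreover have "(\<lambda>n. (if n = 0 then ?I - ?P else 0) + (cos_coeff n *\<^sub>R \<tau> ^ n) * ?P
      + (sin_coeff n *\<^sub>R \<tau> ^ n) * ?W) sums (?I - ?P + cos \<tau> * ?P + sin \<tau> * ?W)"
    by (intro sums_add sums_single sums_mult2 cos_converges sin_converges)
  ultimately show "mat_exp d (\<lambda>i j. \<tau> * cmat (wedge d a b) i j) i j = ?I + (cos \<tau> - 1) * ?P + sin \<tau> * ?W"
    unfolding mat_exp_def by (simp add: sums_iff algebra_simps)
qed

lemma mat_exp_wedge_apply: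
  assumes "vec_on d c"
  shows "mat_app d (mat_exp d (\<lambda>i j. \<tau> * cmat (wedge d a b) i j)) (cvec c) = (\<lambda>i.
     of_real (c i) + (cos \<tau> - 1) * of_real (a i * form d a c + b i * form d b c)
       + sin \<tau> * of_real (a i * form d b c - b i * form d a c))"
  using assms vec_on_a vec_on_b
  by (auto simp: mat_exp_wedge mat_app_cmat_combination mat_app_id mat_app_plane_proj[OF d_pos]
      mat_app_wedge[OF d_pos] fun_eq_iff vec_on_def)

text \<open>With \<open>A, B, P\<close> the three minors in the statement, \<open>u = B a - A b + P w\<close> vanishes at \<open>0\<close>
  and \<open>d\<close>, so \<open>(u, u) \<le> 0\<close>; expanding \<open>(u, u)\<close> gives the claim.\<close>

lemma minor_bound:
  assumes "form d w a = 0" "form d w b = 0"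
  shows "(a 0 * w d - a d * w 0)\<^sup>2 + (b 0 * w d - b d * w 0)\<^sup>2 + (a 0 * b d - a d * b 0)\<^sup>2 * form d w w \<le> 0"
proof -
  define A B P where "A = a 0 * w d - a d * w 0" and "B = b 0 * w d - b d * w 0" and "P = a 0 * b d - a d * b 0"
  have "form d (\<lambda>i. P * w i + B * a i + (- A) * b i) (\<lambda>i. P * w i + B * a i + (- A) * b i) \<le> 0"
    by (rule form_nonpos_if_0d_zero) (simp_all add: A_def B_def P_def algebra_simps)
  moreover have "form d (\<lambda>i. P * w i + B * a i + (- A) * b i) (\<lambda>i. P * w i + B * a i + (- A) * b i)
      = P\<^sup>2 * form d w w + B\<^sup>2 + A\<^sup>2"
    using form_orthogonal_lincomb(1)[of "\<lambda>i. P * w i" B "- A"] assms by (simp add: form_linear power2_eq_square)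
  ultimately show ?thesis
    unfolding A_def B_def P_def by simp
qed

lemma mat_exp_wedge_apply_decomposition:
  fixes \<tau> :: complex
  assumes "vec_on d c"
  defines "z \<equiv> mat_app d (mat_exp d (\<lambda>i j. \<tau> * cmat (wedge d a b) i j)) (cvec c)"
  obtains w m1 m2 where "form d w a = 0" "form d w b = 0" "form d w w = form d c c - (m1\<^sup>2 + m2\<^sup>2)"
    and "(\<lambda>i. Re (z i)) = (\<lambda>i. w i + (cosh (Im \<tau>) * m1) * a i + (cosh (Im \<tau>) * m2) * b i)"
    and "(\<lambda>i. Im (z i)) = (\<lambda>i. (sinh (Im \<tau>) * m2) * a i + (- sinh (Im \<tau>) * m1) * b i)"
proof
  define \<alpha> \<beta> where "\<alpha> = form d a c" and "\<beta> = form d b c"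
  define w where "w = (\<lambda>i. c i - \<alpha> * a i - \<beta> * b i)"
  define m1 m2 where "m1 = \<alpha> * cos (Re \<tau>) + \<beta> * sin (Re \<tau>)" and "m2 = \<beta> * cos (Re \<tau>) - \<alpha> * sin (Re \<tau>)"
  have fc: "form d c a = \<alpha>" "form d c b = \<beta>"
    unfolding \<alpha>_def \<beta>_def by (simp_all add: form_commute)
  show "form d w a = 0" "form d w b = 0"
    by (simp_all add: w_def form_linear form_aa form_bb form_ab form_ba fc)
  have "m1\<^sup>2 + m2\<^sup>2 = \<alpha>\<^sup>2 + \<beta>\<^sup>2"
    unfolding m1_def m2_def using sin_cos_squared_add[of "Re \<tau>"] by algebra
  then show "form d w w = form d c c - (m1\<^sup>2 + m2\<^sup>2)"
    by (simp add: w_def form_linear form_aa form_bb form_ab form_ba fc \<alpha>_def[symmetric] \<beta>_def[symmetric]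
        power2_eq_square)
  have z: "z i = of_real (c i) + (cos \<tau> - 1) * of_real (a i * \<alpha> + b i * \<beta>) + sin \<tau> * of_real (a i * \<beta> - b i * \<alpha>)"
    for i
    unfolding z_def mat_exp_wedge_apply[OF assms(1)] \<alpha>_def \<beta>_def ..
  show "(\<lambda>i. Re (z i)) = (\<lambda>i. w i + (cosh (Im \<tau>) * m1) * a i + (cosh (Im \<tau>) * m2) * b i)"
    by (simp add: fun_eq_iff z Re_cos_cosh Re_sin_cosh w_def m1_def m2_def algebra_simps)
  show "(\<lambda>i. Im (z i)) = (\<lambda>i. (sinh (Im \<tau>) * m2) * a i + (- sinh (Im \<tau>) * m1) * b i)"
    by (simp add: fun_eq_iff z Im_cos_sinh Im_sin_sinh m1_def m2_def algebra_simps)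
qed

end

lemma orthonormal_pair_evec:
  assumes "d \<ge> 1"
  shows "orthonormal_pair d (evec 0) (evec d)"
proof
  show "vec_on d (evec 0)" "vec_on d (evec d)"
    by (simp_all add: vec_on_evec)
  show "form d (evec 0) (evec 0) = (1::real)" "form d (evec d) (evec d) = (1::real)"
    "form d (evec 0) (evec d) = (0::real)"
    unfolding form_evec0_left[OF assms] form_evecd_left[OF assms] using assms by (simp_all add: evec_def)
qed (rule assms)

section \<open>The explicit description of \<open>Z\<^sub>1\<^sub>+\<close>\<close>

definition Z1plus_explicit :: "nat \<Rightarrow> (nat \<Rightarrow> complex) set" where
  "Z1plus_explicit d = {z. vec_on d z \<and>
     form d (\<lambda>i. Re (z i)) (\<lambda>i. Re (z i)) - form d (\<lambda>i. Im (z i)) (\<lambda>i. Im (z i)) = 1 \<and>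
     form d (\<lambda>i. Re (z i)) (\<lambda>i. Im (z i)) = 0 \<and>
     form d (\<lambda>i. Im (z i)) (\<lambda>i. Im (z i)) > 0 \<and>
     Im (z 0) * Re (z d) - Re (z 0) * Im (z d) > 0}"

text \<open>With \<open>r = m\<^sub>1\<^sup>2 + m\<^sub>2\<^sup>2 \<ge> 1\<close>, Cauchy--Schwarz gives
  \<open>(m\<^sub>2 A - m\<^sub>1 B)\<^sup>2 \<le> r (A\<^sup>2 + B\<^sup>2) \<le> r (r - 1) P\<^sup>2 < (ch r P)\<^sup>2\<close>.\<close>

lemma minor_estimate:
  fixes ch P A B m1 m2 :: real
  assumes ch: "ch \<ge> 1" and P: "P > 0" and bound: "A\<^sup>2 + B\<^sup>2 + P\<^sup>2 * (1 - (m1\<^sup>2 + m2\<^sup>2)) \<le> 0"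
  shows "ch * (m1\<^sup>2 + m2\<^sup>2) * P + m2 * A - m1 * B > 0"
proof -
  define r where "r = m1\<^sup>2 + m2\<^sup>2"
  have "P\<^sup>2 * (1 - r) \<le> 0"
    using bound unfolding r_def by (smt (verit) zero_le_power2)
  then have r: "r \<ge> 1"
    using P by (simp add: mult_le_0_iff)
  have "(m2 * A - m1 * B)\<^sup>2 = r * (A\<^sup>2 + B\<^sup>2) - (m1 * A + m2 * B)\<^sup>2"
    unfolding r_def by (simp add: power2_eq_square algebra_simps)
  also have "\<dots> \<le> r * (A\<^sup>2 + B\<^sup>2)"
    by simp
  also have "\<dots> \<le> r * ((r - 1) * P\<^sup>2)"
    using bound r unfolding r_def[symmetric] by (intro mult_left_mono) (auto simp: algebra_simps)
  also have "\<dots> < r * (r * P\<^sup>2)"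
    using r P by simp
  also have "\<dots> \<le> (ch * r * P)\<^sup>2"
  proof -
    have "(r * P)\<^sup>2 * 1 \<le> (r * P)\<^sup>2 * ch\<^sup>2"
      using ch by (intro mult_left_mono) (auto simp: one_le_power)
    then show ?thesis
      by (simp add: power2_eq_square mult_ac)
  qed
  finally have "\<bar>m2 * A - m1 * B\<bar>\<^sup>2 < (ch * r * P)\<^sup>2"
    by simp
  moreover have "ch * r * P > 0"
    using ch r P by simp
  ultimately have "\<bar>m2 * A - m1 * B\<bar> < ch * r * P"
    by (simp add: power2_less_imp_less)
  then show ?thesis
    unfolding r_def by linarith
qed

lemma (in orthonormal_pair) mat_exp_wedge_apply_in_Z1plus_explicit:
  fixes \<tau> :: complex
  assumes minor: "a 0 * b d - a d * b 0 > 0" and c: "vec_on d c" "form d c c = 1" and \<tau>: "Im \<tau> > 0"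
  shows "mat_app d (mat_exp d (\<lambda>i j. \<tau> * cmat (wedge d a b) i j)) (cvec c) \<in> Z1plus_explicit d"
    (is "?z \<in> _")
proof -
  define ch sh where "ch = cosh (Im \<tau>)" and "sh = sinh (Im \<tau>)"
  obtain w m1 m2 where wa: "form d w a = 0" and wb: "form d w b = 0" and ww: "form d w w = 1 - (m1\<^sup>2 + m2\<^sup>2)"
    and Re: "(\<lambda>i. Re (?z i)) = (\<lambda>i. w i + (ch * m1) * a i + (ch * m2) * b i)"
    and Im: "(\<lambda>i. Im (?z i)) = (\<lambda>i. (sh * m2) * a i + (- sh * m1) * b i)"
    using mat_exp_wedge_apply_decomposition[OF c(1), of \<tau>]
    unfolding c(2) ch_def[symmetric] sh_def[symmetric] by blast
  define r where "r = m1\<^sup>2 + m2\<^sup>2"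
  define A B P where "A = a 0 * w d - a d * w 0" and "B = b 0 * w d - b d * w 0" and "P = a 0 * b d - a d * b 0"
  have bound: "A\<^sup>2 + B\<^sup>2 + P\<^sup>2 * (1 - r) \<le> 0"
    using minor_bound[OF wa wb] ww unfolding A_def B_def P_def r_def by simp
  have "P\<^sup>2 * (1 - r) \<le> 0"
    using bound by (smt (verit) zero_le_power2)
  then have r: "r \<ge> 1"
    using minor unfolding P_def by (simp add: mult_le_0_iff)
  have ch: "ch \<ge> 1" and sh: "sh > 0" and chsh: "ch\<^sup>2 = sh\<^sup>2 + 1"
    using \<tau> cosh_real_ge_1 cosh_square_eq unfolding ch_def sh_def by auto
  have "form d (\<lambda>i. Re (?z i)) (\<lambda>i. Re (?z i)) - form d (\<lambda>i. Im (?z i)) (\<lambda>i. Im (?z i))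
      = 1 - r + (ch\<^sup>2 - sh\<^sup>2) * r"
    unfolding Re Im form_orthogonal_lincomb[OF wa wb] form_lincomb ww r_def
    by (simp add: power2_eq_square algebra_simps)
  then have "form d (\<lambda>i. Re (?z i)) (\<lambda>i. Re (?z i)) - form d (\<lambda>i. Im (?z i)) (\<lambda>i. Im (?z i)) = 1"
    using chsh by simp
  moreover have "form d (\<lambda>i. Re (?z i)) (\<lambda>i. Im (?z i)) = 0"
    unfolding Re Im form_orthogonal_lincomb[OF wa wb] by (simp add: algebra_simps)
  moreover have "form d (\<lambda>i. Im (?z i)) (\<lambda>i. Im (?z i)) = sh\<^sup>2 * r"
    unfolding Im form_lincomb r_def by (simp add: power2_eq_square algebra_simps)
  then have "form d (\<lambda>i. Im (?z i)) (\<lambda>i. Im (?z i)) > 0"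
    using sh r by simp
  moreover have "Im (?z 0) * Re (?z d) - Re (?z 0) * Im (?z d) = sh * (ch * r * P + m2 * A - m1 * B)"
  proof -
    have re: "Re (?z i) = w i + (ch * m1) * a i + (ch * m2) * b i"
      and im: "Im (?z i) = (sh * m2) * a i + (- sh * m1) * b i" for i
      using fun_cong[OF Re, of i] fun_cong[OF Im, of i] by simp_all
    show ?thesis
      unfolding re im A_def B_def P_def r_def by (simp add: power2_eq_square algebra_simps)
  qed
  moreover have "ch * r * P + m2 * A - m1 * B > 0"
    using minor_estimate[OF ch _ bound[unfolded r_def]] minor unfolding P_def r_def by simp
  then have "sh * (ch * r * P + m2 * A - m1 * B) > 0"
    using sh by simp
  ultimately show ?thesis
    using vec_on_mat_app unfolding Z1plus_explicit_def by simp
qed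

lemma Z1plus_subset_explicit: "d \<ge> 1 \<Longrightarrow> Z1plus d \<subseteq> Z1plus_explicit d"
  unfolding Z1plus_def C1_def Xd_def
  using orthonormal_pair.mat_exp_wedge_apply_in_Z1plus_explicit orthonormal_pair.intro by fastforce

lemma Z1plus_explicit_polar:
  assumes d: "d \<ge> 1" and z: "z \<in> Z1plus_explicit d"
  obtains u v T where "orthonormal_pair d u v" "v 0 * u d - u 0 * v d > 0" "T > 0"
    "\<And>i. z i = Complex (cosh T * u i) (sinh T * v i)"
proof
  define X Y where "X = form d (\<lambda>i. Re (z i)) (\<lambda>i. Re (z i))" and "Y = form d (\<lambda>i. Im (z i)) (\<lambda>i. Im (z i))"
  define u v where "u = (\<lambda>i. Re (z i) / sqrt X)" and "v = (\<lambda>i. Im (z i) / sqrt Y)"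
  define T where "T = arcosh (sqrt X)"
  have z: "vec_on d z" "X = Y + 1" "Y > 0" "form d (\<lambda>i. Re (z i)) (\<lambda>i. Im (z i)) = 0"
    "Im (z 0) * Re (z d) - Re (z 0) * Im (z d) > 0"
    using z unfolding Z1plus_explicit_def X_def Y_def by auto
  have sqrt: "sqrt X > 1" "sqrt Y > 0"
    using z by auto
  show "orthonormal_pair d u v"
  proof
    show "vec_on d u" "vec_on d v"
      using z(1) by (auto simp: u_def v_def vec_on_def)
    show "form d u u = 1" "form d v v = 1" "form d u v = 0"
      using sqrt z(4) unfolding u_def v_def form_divide_left form_divide_right X_def[symmetric] Y_def[symmetric]
      by (simp_all add: real_sqrt_mult[symmetric])
  qed (rule d)
  have "v 0 * u d - u 0 * v d = (Im (z 0) * Re (z d) - Re (z 0) * Im (z d)) / (sqrt X * sqrt Y)"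
    using sqrt unfolding u_def v_def by (simp add: field_simps)
  then show "v 0 * u d - u 0 * v d > 0"
    using z(5) sqrt by simp
  show "T > 0"
    using sqrt unfolding T_def by simp
  have "cosh T = sqrt X" "sinh T = sqrt Y"
    using sqrt z(2) unfolding T_def by (simp_all add: sinh_arcosh_real)
  then show "z i = Complex (cosh T * u i) (sinh T * v i)" for i
    using sqrt unfolding u_def v_def by (simp add: complex_eq_iff)
qed

lemma Z1plus_explicit_subset: "d \<ge> 1 \<Longrightarrow> Z1plus_explicit d \<subseteq> Z1plus d"
proof
  fix z assume d: "d \<ge> 1" and "z \<in> Z1plus_explicit d"
  then obtain u v T where uv: "orthonormal_pair d u v" and minor: "v 0 * u d - u 0 * v d > 0" and "T > 0"
    and z: "\<And>i. z i = Complex (cosh T * u i) (sinh T * v i)"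
    using Z1plus_explicit_polar by metis
  define b where "b = (\<lambda>i. - v i)"
  interpret orthonormal_pair d u b
    using uv unfolding orthonormal_pair_def b_def vec_on_def by (simp add: form_linear)
  have "z = mat_app d (mat_exp d (\<lambda>i j. (\<i> * of_real T) * cmat (wedge d u b) i j)) (cvec u)"
    unfolding mat_exp_wedge_apply[OF vec_on_a] cos_sin_i_times_of_real form_aa form_ba
    by (auto simp: fun_eq_iff z complex_eq_iff b_def algebra_simps)
  moreover have "u 0 * b d - u d * b 0 > 0"
    using minor by (simp add: b_def algebra_simps)
  then have "wedge d u b \<in> C1 d"
    unfolding C1_def using vec_on_a vec_on_b form_aa form_bb form_ab by blast
  moreover have "u \<in> Xd d" "Im (\<i> * of_real T) > 0"
    using \<open>T > 0\<close> vec_on_a form_aa unfolding Xd_def by auto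
  ultimately show "z \<in> Z1plus d"
    unfolding Z1plus_def by blast
qed

section \<open>The identity component \<open>G\<^sub>0\<close>\<close>

lemma mat_id_in_Ogroup: "mat_id d \<in> Ogroup d"
  unfolding Ogroup_def by (simp add: mat_on_mat_id mat_app_id)

lemma mat_mult_in_Ogroup:
  assumes "A \<in> Ogroup d" "B \<in> Ogroup d"
  shows "mat_mult d A B \<in> Ogroup d"
proof -
  have "form d (mat_app d A (mat_app d B x)) (mat_app d A (mat_app d B y)) = form d x y"
    if "vec_on d x" "vec_on d y" for x y
  proof -
    have "form d (mat_app d A (mat_app d B x)) (mat_app d A (mat_app d B y))
        = form d (mat_app d B x) (mat_app d B y)"
      using assms(1) vec_on_mat_app unfolding Ogroup_def by blast
    also have "\<dots> = form d x y"
      using assms(2) that unfolding Ogroup_def by blast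
    finally show ?thesis .
  qed
  then show ?thesis
    unfolding Ogroup_def by (simp add: mat_on_mat_mult mat_app_mult)
qed

lemma continuous_on_form:
  assumes "\<And>i. continuous_on S (\<lambda>\<sigma>. f \<sigma> i)" and "\<And>i. continuous_on S (\<lambda>\<sigma>. g \<sigma> i)"
  shows "continuous_on S (\<lambda>\<sigma>. form d (f \<sigma>) (g \<sigma>) :: real)"
  unfolding form_def by (intro continuous_intros assms)

lemma continuous_on_mat_entry: "continuous_on S (\<lambda>B::nat \<Rightarrow> nat \<Rightarrow> real. B k j)"
  by (rule continuous_on_subset[OF continuous_on_product_then_coordinatewise[OF continuous_on_product_coordinates]])
    auto

lemma continuous_on_mat_mult_left: "continuous_on S (\<lambda>B. mat_mult d (A::nat \<Rightarrow> nat \<Rightarrow> real) B)"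
proof (intro continuous_on_coordinatewise_then_product)
  fix i j
  show "continuous_on S (\<lambda>B. mat_mult d A B i j)"
  proof (cases "i \<le> d \<and> j \<le> d")
    case True
    then have "(\<lambda>B. mat_mult d A B i j) = (\<lambda>B. \<Sum>k\<le>d. A i k * B k j)"
      by (simp add: mat_mult_def fun_eq_iff)
    moreover have "continuous_on S (\<lambda>B::nat \<Rightarrow> nat \<Rightarrow> real. \<Sum>k\<le>d. A i k * B k j)"
      by (intro continuous_on_sum continuous_on_mult_left continuous_on_mat_entry)
    ultimately show ?thesis
      by metis
  next
    case False
    then have "(\<lambda>B. mat_mult d A B i j) = (\<lambda>B. 0)"
      by (auto simp: mat_mult_def fun_eq_iff)
    then show ?thesis
      by (metis continuous_on_const)
  qed
qed

lemma G0_subset_Ogroup: "G0 d \<subseteq> Ogroup d"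
  unfolding G0_def by (rule connected_component_subset)

lemma mat_on_G0: "L \<in> G0 d \<Longrightarrow> mat_on d L"
  using G0_subset_Ogroup unfolding Ogroup_def by blast

lemma mat_id_in_G0: "mat_id d \<in> G0 d"
  unfolding G0_def using mat_id_in_Ogroup by simp

lemma mat_mult_in_G0:
  assumes A: "A \<in> G0 d" and B: "B \<in> G0 d"
  shows "mat_mult d A B \<in> G0 d"
proof -
  have AO: "A \<in> Ogroup d" and "mat_on d A"
    using A G0_subset_Ogroup unfolding Ogroup_def by auto
  then have "A \<in> mat_mult d A ` G0 d"
    using mat_id_in_G0 mat_mult_id_right by (metis image_eqI)
  then have "mat_mult d A ` G0 d \<subseteq> connected_component_set (Ogroup d) A"
    using G0_subset_Ogroup mat_mult_in_Ogroup[OF AO]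
    by (intro connected_component_maximal connected_continuous_image[OF continuous_on_mat_mult_left])
      (auto simp: G0_def connected_connected_component)
  also have "\<dots> = G0 d"
    unfolding G0_def using A[unfolded G0_def] by (rule connected_component_eq)
  finally show ?thesis
    using B by auto
qed

lemma path_end_in_G0:
  assumes "continuous_on {0..1::real} \<gamma>" "\<And>s. s \<in> {0..1} \<Longrightarrow> \<gamma> s \<in> Ogroup d" "\<gamma> 0 = mat_id d"
  shows "\<gamma> 1 \<in> G0 d"
proof -
  have "\<gamma> ` {0..1} \<subseteq> G0 d"
    unfolding G0_def using assms
    by (intro connected_component_maximal connected_continuous_image) (auto intro: image_eqI[of _ _ 0])
  then show ?thesis
    by auto
qed

lemma orthonormal_pair_columns:
  assumes "L \<in> Ogroup d" "d \<ge> 1"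
  shows "orthonormal_pair d (\<lambda>i. L i 0) (\<lambda>i. L i d)"
proof -
  have L: "mat_on d L"
    using assms(1) unfolding Ogroup_def by blast
  have "form d (\<lambda>i. L i j) (\<lambda>i. L i k) = form d (evec j) (evec k)" if "j \<le> d" "k \<le> d" for j k
  proof -
    have "form d (mat_app d L (evec j)) (mat_app d L (evec k)) = form d (evec j) (evec k)"
      using assms(1) vec_on_evec that unfolding Ogroup_def by blast
    then show ?thesis
      using that by (simp add: mat_app_evec[OF L])
  qed
  moreover have "orthonormal_pair d (evec 0) (evec d)"
    by (rule orthonormal_pair_evec[OF assms(2)])
  ultimately show ?thesis
    using assms(2) L unfolding orthonormal_pair_def vec_on_def mat_on_def by simp
qed

text \<open>The minor is continuous, never zero on the orthogonal group and equal to \<open>1\<close> at the identity.\<close>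

lemma minor_0d_pos_G0:
  assumes L: "L \<in> G0 d" and d: "d \<ge> 1"
  shows "L 0 0 * L d d - L d 0 * L 0 d > 0"
proof (rule ccontr)
  define f where "f = (\<lambda>L::nat \<Rightarrow> nat \<Rightarrow> real. L 0 0 * L d d - L d 0 * L 0 d)"
  have nonzero: "f K \<noteq> 0" if "K \<in> G0 d" for K
    using orthonormal_pair.minor_0d_nonzero[OF orthonormal_pair_columns] that d G0_subset_Ogroup
    unfolding f_def by blast
  have "continuous_on (G0 d) f"
    unfolding f_def by (intro continuous_on_diff continuous_on_mult continuous_on_mat_entry)
  then have connected: "connected (f ` G0 d)"
    by (rule connected_continuous_image) (simp add: G0_def connected_connected_component)
  assume "\<not> ?thesis"
  then have "f L \<le> 0"
    unfolding f_def by linarith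
  moreover have "0 \<le> f (mat_id d)"
    using d by (simp add: f_def mat_id_def)
  moreover have "f L \<in> f ` G0 d" "f (mat_id d) \<in> f ` G0 d"
    using L mat_id_in_G0 by blast+
  ultimately have "0 \<in> f ` G0 d"
    using connectedD_interval[OF connected] by blast
  then show False
    using nonzero by auto
qed

section \<open>Rotations connecting a unit vector to another one\<close>

lemma form_reflection:
  fixes n x y :: "nat \<Rightarrow> real"
  assumes "c * form d n n = 2"
  shows "form d (\<lambda>i. x i - c * form d n x * n i) (\<lambda>i. y i - c * form d n y * n i) = form d x y"
proof -
  have "form d (\<lambda>i. x i - c * form d n x * n i) (\<lambda>i. y i - c * form d n y * n i)
      = form d x y - c * form d n x * form d n y * (2 - c * form d n n)"
    by (simp add: form_linear form_commute[of d x n] form_commute[of d y n]) (simp add: algebra_simps)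
  then show ?thesis
    using assms by simp
qed

text \<open>For unit vectors \<open>e, v\<close>: the product of the reflections in \<open>e\<^sup>\<bottom>\<close> and \<open>(e + v)\<^sup>\<bottom>\<close>.\<close>

definition rotation_onto :: "nat \<Rightarrow> (nat \<Rightarrow> real) \<Rightarrow> (nat \<Rightarrow> real) \<Rightarrow> nat \<Rightarrow> nat \<Rightarrow> real" where
  "rotation_onto d e v = (\<lambda>i j. mat_id d i j + (if i \<le> d \<and> j \<le> d then 2 * v i * form d e (evec j)
      - (v i + e i) * form d (\<lambda>k. v k + e k) (evec j) / (1 + form d e v) else 0))"

lemma mat_on_rotation_onto: "mat_on d (rotation_onto d e v)"
  by (simp add: mat_on_def rotation_onto_def mat_id_def)

lemma rotation_onto_self:
  assumes "vec_on d e" "form d e e = 1"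
  shows "rotation_onto d e e = mat_id d"
  using assms by (simp add: rotation_onto_def fun_eq_iff form_linear)

lemma continuous_on_rotation_onto:
  fixes f :: "real \<Rightarrow> nat \<Rightarrow> real"
  assumes "d \<ge> 1" and "\<And>i. continuous_on S (\<lambda>\<sigma>. f \<sigma> i)" and "\<And>\<sigma>. \<sigma> \<in> S \<Longrightarrow> form d e (f \<sigma>) > 0"
  shows "continuous_on S (\<lambda>\<sigma>. rotation_onto d e (f \<sigma>))"
proof (intro continuous_on_coordinatewise_then_product)
  fix i j
  have form: "continuous_on S (\<lambda>\<sigma>. form d e (f \<sigma>))"
    by (intro continuous_on_form continuous_on_const assms(2))
  have denominator: "\<forall>\<sigma>\<in>S. 1 + form d e (f \<sigma>) \<noteq> 0"
    using assms(3) by (metis add_pos_pos less_irrefl zero_less_one)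
  show "continuous_on S (\<lambda>\<sigma>. rotation_onto d e (f \<sigma>) i j)"
  proof (cases "i \<le> d \<and> j \<le> d")
    case True
    then have entry: "rotation_onto d e (f \<sigma>) i j = mat_id d i j + (2 * f \<sigma> i * (form_sign d j * e j)
        - (f \<sigma> i + e i) * (form_sign d j * (f \<sigma> j + e j)) / (1 + form d e (f \<sigma>)))" for \<sigma>
      unfolding rotation_onto_def form_evec[OF assms(1)] by simp
    then show ?thesis
      using denominator unfolding entry by (intro continuous_intros form assms(2))
  next
    case False
    then have "rotation_onto d e (f \<sigma>) i j = mat_id d i j" for \<sigma>
      by (auto simp: rotation_onto_def)
    then show ?thesis
      by simp
  qed
qed

locale unit_pair =
  fixes d :: nat and e v :: "nat \<Rightarrow> real"
  assumes d_pos: "d \<ge> 1" and vec_on_e: "vec_on d e" and vec_on_v: "vec_on d v"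
    and form_ee: "form d e e = 1" and form_vv: "form d v v = 1" and form_ev_pos: "form d e v > 0"
begin

lemma denominator_nonzero: "1 + form d e v \<noteq> 0"
  using form_ev_pos by simp

lemma mat_app_rotation_onto:
  assumes "vec_on d x"
  shows "mat_app d (rotation_onto d e v) x
    = (\<lambda>i. x i + 2 * v i * form d e x - (v i + e i) * form d (\<lambda>k. v k + e k) x / (1 + form d e v))"
proof (rule ext)
  fix i
  define r where "r = (\<lambda>i k. 2 * v i * e k - (v i + e i) * (v k + e k) / (1 + form d e v))"
  have "mat_app d (rotation_onto d e v) x i = x i + (if i \<le> d then form d (r i) x else 0)"
    unfolding rotation_onto_def mat_app_add mat_app_id[OF assms]
    by (subst mat_app_form_rows[OF d_pos, of _ r]) (auto simp: r_def form_linear)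
  then show "mat_app d (rotation_onto d e v) x i
      = x i + 2 * v i * form d e x - (v i + e i) * form d (\<lambda>k. v k + e k) x / (1 + form d e v)"
    using assms vec_on_e vec_on_v by (cases "i \<le> d") (simp_all add: r_def form_linear add_diff_eq vec_on_def)
qed

lemma rotation_onto_eq_reflections:
  assumes "vec_on d x"
  defines "y \<equiv> \<lambda>i. x i - 2 * form d e x * e i"
  shows "mat_app d (rotation_onto d e v) x
    = (\<lambda>i. y i - 1 / (1 + form d e v) * form d (\<lambda>k. v k + e k) y * (v i + e i))"
  unfolding mat_app_rotation_onto[OF assms(1)] y_def
  by (simp add: fun_eq_iff form_linear form_ee form_commute[of d v e];
      simp add: field_simps denominator_nonzero)

lemma rotation_onto_in_Ogroup: "rotation_onto d e v \<in> Ogroup d"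
proof -
  have "(1 / (1 + form d e v)) * form d (\<lambda>k. v k + e k) (\<lambda>k. v k + e k) = 2"
    by (simp add: form_linear form_ee form_vv form_commute[of d v e];
        simp add: field_simps denominator_nonzero)
  moreover have "2 * form d e e = 2"
    by (simp add: form_ee)
  ultimately have "form d (mat_app d (rotation_onto d e v) x) (mat_app d (rotation_onto d e v) y) = form d x y"
    if "vec_on d x" "vec_on d y" for x y
    unfolding rotation_onto_eq_reflections[OF that(1)] rotation_onto_eq_reflections[OF that(2)]
    by (simp only: form_reflection)
  then show ?thesis
    unfolding Ogroup_def using mat_on_rotation_onto by blast
qed

lemma rotation_onto_source: "mat_app d (rotation_onto d e v) e = v"
  by (simp add: mat_app_rotation_onto[OF vec_on_e] fun_eq_iff form_linear form_ee form_commute[of d v e];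
      simp add: field_simps denominator_nonzero)

lemma rotation_onto_fixes: "vec_on d x \<Longrightarrow> form d e x = 0 \<Longrightarrow> form d v x = 0 \<Longrightarrow> mat_app d (rotation_onto d e v) x = x"
  by (simp add: mat_app_rotation_onto form_linear)

end

lemma unit_pair_normalise:
  assumes "d \<ge> 1" "vec_on d e" "vec_on d x" "form d e e = 1" "form d x x > 0" "form d e x > 0"
  shows "unit_pair d e (\<lambda>i. x i / sqrt (form d x x))"
  using assms unfolding unit_pair_def
  by (simp add: vec_on_def form_divide_left form_divide_right real_sqrt_mult[symmetric])

context unit_pair
begin

lemma segment_in_cone:
  assumes "\<sigma> \<in> {0..1}"
  defines "x \<equiv> \<lambda>i. (1 - \<sigma>) * e i + \<sigma> * v i"
  shows "form d x x > 0" and "form d e x > 0"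
proof -
  have k: "form d e v > 0"
    by (rule form_ev_pos)
  have "form d x x = (1 - \<sigma>)\<^sup>2 + \<sigma>\<^sup>2 + 2 * \<sigma> * (1 - \<sigma>) * form d e v"
    unfolding x_def
    by (simp add: form_linear form_ee form_vv form_commute[of d v e]; simp add: power2_eq_square algebra_simps)
  moreover have "(1 - \<sigma>)\<^sup>2 + \<sigma>\<^sup>2 > 0"
    by (auto simp: sum_power2_gt_zero_iff)
  moreover have "2 * \<sigma> * (1 - \<sigma>) * form d e v \<ge> 0"
    using assms(1) k by (intro mult_nonneg_nonneg) auto
  ultimately show "form d x x > 0"
    by linarith
  have "form d e x = (1 - \<sigma>) + \<sigma> * form d e v"
    unfolding x_def by (simp add: form_linear form_ee)
  moreover have "(1 - \<sigma>) + \<sigma> * form d e v > 0"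
  proof (cases "\<sigma> = 1")
    case False
    then show ?thesis
      using assms(1) k by (simp add: add_pos_nonneg)
  qed (simp add: k)
  ultimately show "form d e x > 0"
    by simp
qed

text \<open>Join \<open>v\<close> to \<open>e\<close> by the normalised segment, which stays in the region \<open>(e, \<cdot>) > 0\<close>.\<close>

lemma rotation_onto_in_G0: "rotation_onto d e v \<in> G0 d"
proof -
  define x where "x = (\<lambda>\<sigma> i. (1 - \<sigma>) * e i + \<sigma> * v i)"
  define w where "w = (\<lambda>\<sigma> i. x \<sigma> i / sqrt (form d (x \<sigma>) (x \<sigma>)))"
  have pair: "unit_pair d e (w \<sigma>)" if "\<sigma> \<in> {0..1}" for \<sigma>
    unfolding w_def using segment_in_cone[OF that] d_pos vec_on_e vec_on_v form_ee
    by (intro unit_pair_normalise) (auto simp: x_def vec_on_def)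
  have "continuous_on {0..1} (\<lambda>\<sigma>. w \<sigma> i)" for i
  proof -
    have "\<forall>\<sigma>\<in>{0..1}. sqrt (form d (x \<sigma>) (x \<sigma>)) \<noteq> 0"
      using segment_in_cone(1) unfolding x_def by force
    then show ?thesis
      unfolding w_def by (intro continuous_intros continuous_on_form) (auto simp: x_def intro!: continuous_intros)
  qed
  then have cont: "continuous_on {0..1} (\<lambda>\<sigma>. rotation_onto d e (w \<sigma>))"
    using d_pos unit_pair.form_ev_pos[OF pair] by (intro continuous_on_rotation_onto) auto
  have ends: "w 0 = e" "w 1 = v"
    by (simp_all add: w_def x_def form_ee form_vv)
  have "rotation_onto d e (w 0) = mat_id d"
    unfolding ends by (rule rotation_onto_self[OF vec_on_e form_ee])
  then have "rotation_onto d e (w 1) \<in> G0 d"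
    using path_end_in_G0[OF cont unit_pair.rotation_onto_in_Ogroup[OF pair]] by blast
  then show ?thesis
    unfolding ends .
qed

end

definition rotation_0d :: "nat \<Rightarrow> real \<Rightarrow> nat \<Rightarrow> nat \<Rightarrow> real" where
  "rotation_0d d \<theta> = (\<lambda>i j. if i = 0 \<and> j = 0 then cos \<theta> else if i = 0 \<and> j = d then sin \<theta>
     else if i = d \<and> j = 0 then - sin \<theta> else if i = d \<and> j = d then cos \<theta> else mat_id d i j)"

lemma mat_app_rotation_0d:
  assumes "d \<ge> 1"
  shows "mat_app d (rotation_0d d \<theta>) x = (\<lambda>i. if i = 0 then cos \<theta> * x 0 + sin \<theta> * x d
     else if i = d then - sin \<theta> * x 0 + cos \<theta> * x d else if i \<le> d then x i else 0)"
proof (rule ext)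
  fix i
  have "(\<Sum>j\<le>d. rotation_0d d \<theta> i j * x j)
      = (\<Sum>j\<le>d. (if j = 0 then rotation_0d d \<theta> i 0 * x 0 else 0) + (if j = d then rotation_0d d \<theta> i d * x d else 0)
          + (if j = i \<and> i \<noteq> 0 \<and> i \<noteq> d then x i else 0))"
    using assms by (intro sum.cong) (auto simp: rotation_0d_def mat_id_def)
  then show "mat_app d (rotation_0d d \<theta>) x i = (if i = 0 then cos \<theta> * x 0 + sin \<theta> * x d
     else if i = d then - sin \<theta> * x 0 + cos \<theta> * x d else if i \<le> d then x i else 0)"
    using assms by (auto simp: mat_app_def sum.distrib rotation_0d_def mat_id_def)
qed

lemma rotation_0d_in_Ogroup:
  assumes "d \<ge> 1"
  shows "rotation_0d d \<theta> \<in> Ogroup d"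
proof -
  have "form d (mat_app d (rotation_0d d \<theta>) x) (mat_app d (rotation_0d d \<theta>) y) = form d x y" for x y
  proof -
    have "(\<Sum>j\<in>{1..<d}. mat_app d (rotation_0d d \<theta>) x j * mat_app d (rotation_0d d \<theta>) y j) = (\<Sum>j\<in>{1..<d}. x j * y j)"
      by (intro sum.cong) (auto simp: mat_app_rotation_0d[OF assms])
    moreover have "(cos \<theta> * x 0 + sin \<theta> * x d) * (cos \<theta> * y 0 + sin \<theta> * y d)
        + (- sin \<theta> * x 0 + cos \<theta> * x d) * (- sin \<theta> * y 0 + cos \<theta> * y d) = x 0 * y 0 + x d * y d"
      using sin_cos_squared_add[of \<theta>] by algebra
    ultimately show ?thesis
      using assms unfolding form_def by (simp add: mat_app_rotation_0d[OF assms])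
  qed
  moreover have "mat_on d (rotation_0d d \<theta>)"
    by (auto simp: mat_on_def rotation_0d_def mat_id_def)
  ultimately show ?thesis
    unfolding Ogroup_def by auto
qed

lemma rotation_0d_in_G0:
  assumes "d \<ge> 1"
  shows "rotation_0d d \<theta> \<in> G0 d"
proof -
  have "continuous_on {0..1} (\<lambda>\<sigma>. rotation_0d d (\<sigma> * \<theta>))"
  proof (intro continuous_on_coordinatewise_then_product)
    fix i j
    define c1 c2 c3 where "c1 = (if (i = 0 \<and> j = 0) \<or> (i = d \<and> j = d) then 1 else (0::real))"
      and "c2 = (if i = 0 \<and> j = d then 1 else if i = d \<and> j = 0 then -1 else (0::real))"
      and "c3 = (if (i = 0 \<or> i = d) \<and> (j = 0 \<or> j = d) then 0 else (mat_id d i j :: real))"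
    have "rotation_0d d \<phi> i j = c1 * cos \<phi> + c2 * sin \<phi> + c3" for \<phi>
      using assms unfolding rotation_0d_def c1_def c2_def c3_def by auto
    then show "continuous_on {0..1} (\<lambda>\<sigma>. rotation_0d d (\<sigma> * \<theta>) i j)"
      by (simp add: continuous_intros)
  qed
  moreover have "rotation_0d d (0 * \<theta>) = mat_id d"
    using assms by (auto simp: rotation_0d_def mat_id_def fun_eq_iff)
  ultimately show ?thesis
    using path_end_in_G0[of "\<lambda>\<sigma>. rotation_0d d (\<sigma> * \<theta>)"] rotation_0d_in_Ogroup[OF assms] by simp
qed

lemma (in orthonormal_pair) rotation_normalising_pair:
  assumes minor: "a 0 * b d - a d * b 0 > 0"
  obtains \<theta> where "- sin \<theta> * a 0 + cos \<theta> * b 0 = 0" "- sin \<theta> * a d + cos \<theta> * b d > 0"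
    "cos \<theta> * a 0 + sin \<theta> * b 0 > 0"
proof -
  define \<rho> where "\<rho> = sqrt ((a 0)\<^sup>2 + (b 0)\<^sup>2)"
  have nonzero: "a 0 \<noteq> 0 \<or> b 0 \<noteq> 0"
    using minor by auto
  then have \<rho>: "\<rho> > 0" "\<rho>\<^sup>2 = (a 0)\<^sup>2 + (b 0)\<^sup>2"
    unfolding \<rho>_def by (auto simp: sum_power2_gt_zero_iff)
  have "(a 0 / \<rho>)\<^sup>2 + (b 0 / \<rho>)\<^sup>2 = ((a 0)\<^sup>2 + (b 0)\<^sup>2) / \<rho>\<^sup>2"
    by (simp add: power_divide add_divide_distrib)
  then obtain \<theta> where \<theta>: "cos \<theta> = a 0 / \<rho>" "sin \<theta> = b 0 / \<rho>"
    using sincos_total_2pi \<rho> nonzero by (metis divide_self_if zero_less_power2 less_irrefl)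
  show ?thesis
  proof (rule that[of \<theta>])
    show "- sin \<theta> * a 0 + cos \<theta> * b 0 = 0"
      unfolding \<theta> by (simp add: algebra_simps)
    have "- sin \<theta> * a d + cos \<theta> * b d = (a 0 * b d - a d * b 0) / \<rho>"
      using \<rho> unfolding \<theta> by (simp add: field_simps)
    then show "- sin \<theta> * a d + cos \<theta> * b d > 0"
      using minor \<rho> by simp
    have "cos \<theta> * a 0 + sin \<theta> * b 0 = \<rho>"
      using \<rho> unfolding \<theta> by (simp add: field_simps power2_eq_square)
    then show "cos \<theta> * a 0 + sin \<theta> * b 0 > 0"
      using \<rho> by simp
  qed
qed

lemma (in orthonormal_pair) G0_sending_evecs:
  assumes b0: "b 0 = 0" and bd: "b d > 0" and a0: "a 0 > 0"
  obtains M where "M \<in> G0 d" "mat_app d M (evec 0) = a" "mat_app d M (evec d) = b"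
proof
  interpret E: orthonormal_pair d "evec 0" "evec d"
    by (rule orthonormal_pair_evec[OF d_pos])
  interpret T1: unit_pair d "evec d" b
    using d_pos E.vec_on_b vec_on_b E.form_bb form_bb bd by unfold_locales (simp_all add: form_evecd_left)
  interpret T2: unit_pair d "evec 0" a
    using d_pos E.vec_on_a vec_on_a E.form_aa form_aa a0 by unfold_locales (simp_all add: form_evec0_left)
  show "mat_mult d (rotation_onto d (evec 0) a) (rotation_onto d (evec d) b) \<in> G0 d"
    by (intro mat_mult_in_G0 T1.rotation_onto_in_G0 T2.rotation_onto_in_G0)
  have "mat_app d (rotation_onto d (evec d) b) (evec 0) = evec 0"
    using E.form_ba b0 d_pos by (intro T1.rotation_onto_fixes vec_on_evec) (auto simp: form_commute[of d b] form_evec0_left)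
  then show "mat_app d (mat_mult d (rotation_onto d (evec 0) a) (rotation_onto d (evec d) b)) (evec 0) = a"
    by (simp add: mat_app_mult T2.rotation_onto_source)
  have "mat_app d (rotation_onto d (evec 0) a) b = b"
    using form_ab b0 d_pos by (intro T2.rotation_onto_fixes vec_on_b) (auto simp: form_evec0_left)
  then show "mat_app d (mat_mult d (rotation_onto d (evec 0) a) (rotation_onto d (evec d) b)) (evec d) = b"
    by (simp add: mat_app_mult T1.rotation_onto_source)
qed

text \<open>Conversely to \<open>minor_0d_pos_G0\<close>: after a rotation in the \<open>(e\<^sub>0, e\<^sub>d)\<close>-plane the
  pair satisfies the hypotheses of \<open>G0_sending_evecs\<close>.\<close>

lemma (in orthonormal_pair) G0_with_columns:
  assumes minor: "a 0 * b d - a d * b 0 > 0"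
  obtains L where "L \<in> G0 d" "\<And>i. L i 0 = a i" "\<And>i. L i d = b i"
proof -
  obtain \<theta> where \<theta>: "- sin \<theta> * a 0 + cos \<theta> * b 0 = 0" "- sin \<theta> * a d + cos \<theta> * b d > 0"
    "cos \<theta> * a 0 + sin \<theta> * b 0 > 0"
    using rotation_normalising_pair[OF minor] by blast
  define c s where "c = cos \<theta>" and "s = sin \<theta>"
  have cs: "c\<^sup>2 + s\<^sup>2 = 1"
    unfolding c_def s_def by (rule sin_cos_squared_add2)
  define p q where "p = (\<lambda>i. (- s) * a i + c * b i)" and "q = (\<lambda>i. c * a i + s * b i)"
  have "orthonormal_pair d q p"
    using d_pos vec_on_a vec_on_b cs unfolding orthonormal_pair_def p_def q_def form_lincomb
    by (auto simp: vec_on_def power2_eq_square algebra_simps)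
  then obtain M where M: "M \<in> G0 d" "mat_app d M (evec 0) = q" "mat_app d M (evec d) = p"
    using orthonormal_pair.G0_sending_evecs \<theta> unfolding p_def q_def c_def s_def by blast
  define L where "L = mat_mult d M (rotation_0d d \<theta>)"
  have columns_0d: "(\<lambda>k. rotation_0d d \<theta> k 0) = (\<lambda>k. c * evec 0 k + (- s) * evec d k)"
    "(\<lambda>k. rotation_0d d \<theta> k d) = (\<lambda>k. s * evec 0 k + c * evec d k)"
    using d_pos by (auto simp: rotation_0d_def evec_def mat_id_def c_def s_def fun_eq_iff)
  have "(\<lambda>i. L i 0) = (\<lambda>i. c * q i + (- s) * p i)" "(\<lambda>i. L i d) = (\<lambda>i. s * q i + c * p i)"
    unfolding L_def mat_mult_column[OF le0] mat_mult_column[OF order_refl] columns_0d mat_app_lincomb M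
    by simp_all
  moreover have "c * q i + (- s) * p i = (c\<^sup>2 + s\<^sup>2) * a i" "s * q i + c * p i = (c\<^sup>2 + s\<^sup>2) * b i" for i
    unfolding p_def q_def by (simp_all add: power2_eq_square algebra_simps)
  ultimately have "L i 0 = a i" "L i d = b i" for i
    using cs by (metis mult_1)+
  moreover have "L \<in> G0 d"
    unfolding L_def using M(1) rotation_0d_in_G0[OF d_pos] by (rule mat_mult_in_G0)
  ultimately show ?thesis
    using that by blast
qed

section \<open>\<open>Z\<^sub>1\<^sub>+\<close> as a \<open>G\<^sub>0\<close>-orbit\<close>

lemma mat_exp_M0d_apply:
  assumes d: "d \<ge> 1" and L: "mat_on d L"
  shows "mat_app d (cmat L) (mat_app d (mat_exp d (\<lambda>i j. \<i> * complex_of_real t * cmat (M0d d) i j)) (evec d))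
    = (\<lambda>i. Complex (cosh t * L i d) (sinh t * L i 0))"
proof -
  interpret orthonormal_pair d "evec 0" "evec d"
    by (rule orthonormal_pair_evec[OF d])
  have evec_complex: "(evec d :: nat \<Rightarrow> complex) = cvec (evec d)"
    by (auto simp: cvec_def evec_def)
  have inner: "mat_app d (mat_exp d (\<lambda>i j. \<i> * complex_of_real t * cmat (M0d d) i j)) (evec d)
      = (\<lambda>j. of_real (cosh t) * cvec (evec d) j + (\<i> * of_real (sinh t)) * cvec (evec 0) j)"
    unfolding evec_complex M0d_def mat_exp_wedge_apply[OF vec_on_b] cos_sin_i_times_of_real form_ab form_bb
    by (simp add: fun_eq_iff cvec_def algebra_simps)
  show ?thesis
    unfolding inner mat_app_lincomb mat_app_cmat_cvec mat_app_evec[OF L le0] mat_app_evec[OF L order_refl]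
    by (simp add: fun_eq_iff cvec_def complex_eq_iff)
qed

lemma Complex_columns_in_Z1plus_explicit:
  assumes L: "L \<in> G0 d" and d: "d \<ge> 1" and t: "t > 0"
  shows "(\<lambda>i. Complex (cosh t * L i d) (sinh t * L i 0)) \<in> Z1plus_explicit d" (is "?z \<in> _")
proof -
  interpret orthonormal_pair d "\<lambda>i. L i 0" "\<lambda>i. L i d"
    using orthonormal_pair_columns[OF _ d] L G0_subset_Ogroup by blast
  have "cosh t * cosh t - sinh t * sinh t = 1"
    using cosh_square_eq[of t] by (simp add: power2_eq_square)
  then have "form d (\<lambda>i. Re (?z i)) (\<lambda>i. Re (?z i)) - form d (\<lambda>i. Im (?z i)) (\<lambda>i. Im (?z i)) = 1"
    by (simp add: form_linear form_aa form_bb)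
  moreover have "form d (\<lambda>i. Re (?z i)) (\<lambda>i. Im (?z i)) = 0"
    by (simp add: form_linear form_ba)
  moreover have "form d (\<lambda>i. Im (?z i)) (\<lambda>i. Im (?z i)) > 0"
    using t by (simp add: form_linear form_aa)
  moreover have "sinh t * cosh t * (L 0 0 * L d d - L d 0 * L 0 d) > 0"
    using t minor_0d_pos_G0[OF L d] by simp
  moreover have "vec_on d ?z"
    using vec_on_a vec_on_b by (simp add: vec_on_def complex_eq_iff)
  ultimately show ?thesis
    unfolding Z1plus_explicit_def by (simp add: algebra_simps)
qed

definition G0_orbit :: "nat \<Rightarrow> (nat \<Rightarrow> complex) set" where
  "G0_orbit d = {mat_app d (cmat \<Lambda>) (mat_app d (mat_exp d (\<lambda>i j. \<i> * complex_of_real t * cmat (M0d d) i j)) (evec d))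
      | \<Lambda> t. \<Lambda> \<in> G0 d \<and> t > 0}"

lemma G0_orbit_eq_Z1plus_explicit:
  assumes d: "d \<ge> 1"
  shows "G0_orbit d = Z1plus_explicit d"
proof (intro subset_antisym subsetI)
  fix z
  assume "z \<in> G0_orbit d"
  then obtain L t where "L \<in> G0 d" "t > 0"
    and "z = mat_app d (cmat L) (mat_app d (mat_exp d (\<lambda>i j. \<i> * complex_of_real t * cmat (M0d d) i j)) (evec d))"
    unfolding G0_orbit_def by blast
  then show "z \<in> Z1plus_explicit d"
    using Complex_columns_in_Z1plus_explicit d mat_exp_M0d_apply mat_on_G0 by simp
next
  fix z
  assume "z \<in> Z1plus_explicit d"
  then obtain u v T where uv: "orthonormal_pair d u v" and minor: "v 0 * u d - u 0 * v d > 0" and "T > 0"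
    and z: "\<And>i. z i = Complex (cosh T * u i) (sinh T * v i)"
    using Z1plus_explicit_polar[OF d] by metis
  obtain L where "L \<in> G0 d" "\<And>i. L i 0 = v i" "\<And>i. L i d = u i"
    using orthonormal_pair.G0_with_columns[OF orthonormal_pair.swap[OF uv]] minor
    by (metis mult.commute)
  with \<open>T > 0\<close> show "z \<in> G0_orbit d"
    unfolding G0_orbit_def
    by (auto simp: mat_exp_M0d_apply[OF d mat_on_G0] z fun_eq_iff intro!: exI[of _ L] exI[of _ T])
qed

lemma Z1plus_explicit_ratio:
  assumes "z \<in> Z1plus_explicit d"
  shows "z 0 \<noteq> 0 \<and> z d \<noteq> 0 \<and> Im (z 0 / z d) > 0"
proof -
  have minor: "Im (z 0) * Re (z d) - Re (z 0) * Im (z d) > 0"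
    using assms unfolding Z1plus_explicit_def by blast
  then have "z 0 \<noteq> 0" "z d \<noteq> 0"
    by auto
  moreover have "Im (z 0 / z d) = (Im (z 0) * Re (z d) - Re (z 0) * Im (z d)) / (cmod (z d))\<^sup>2"
    by (simp add: Im_divide cmod_power2 algebra_simps)
  ultimately show ?thesis
    using minor by simp
qed

theorem lemma4:
  fixes d :: nat
  assumes "d \<ge> 2"
  shows "(Z1plus d = {z. vec_on d z \<and>
            form d (\<lambda>i. Re (z i)) (\<lambda>i. Re (z i)) - form d (\<lambda>i. Im (z i)) (\<lambda>i. Im (z i)) = 1 \<and>
            form d (\<lambda>i. Re (z i)) (\<lambda>i. Im (z i)) = 0 \<and>
            form d (\<lambda>i. Im (z i)) (\<lambda>i. Im (z i)) > 0 \<and>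
            Im (z 0) * Re (z d) - Re (z 0) * Im (z d) > 0}) \<and>
    (Z1plus d = {mat_app d (cmat \<Lambda>)
                       (mat_app d (mat_exp d (\<lambda>i j. \<i> * complex_of_real t * cmat (M0d d) i j)) (evec d))
                     | \<Lambda> t. \<Lambda> \<in> G0 d \<and> t > 0}) \<and>
    (\<forall>z\<in>Z1plus d. z 0 \<noteq> 0 \<and> z d \<noteq> 0 \<and> Im (z 0 / z d) > 0)"
proof -
  have d: "d \<ge> 1"
    using assms by simp
  have explicit: "Z1plus d = Z1plus_explicit d"
    using Z1plus_subset_explicit[OF d] Z1plus_explicit_subset[OF d] by blast
  show ?thesis
    using G0_orbit_eq_Z1plus_explicit[OF d] Z1plus_explicit_ratio
    unfolding explicit G0_orbit_def by (simp add: Z1plus_explicit_def)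
qed

end
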